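(* Let $K$ be a non-commutative division ring, let $R:=K[X,Y]$ be the polynomial ring over $K$ in two independent central indeterminates $X,Y$, and let $a,b\in K$ with $ab-ba\neq 0$. Then the pair $(X+a,-(Y+b))\in R^2$ is unimodular (there exist $x',y'\in R$ with $(X+a)x'-(Y+b)y'=1$) but not admissible (it is not the first row of any invertible $2\times2$ matrix over $R$).
   Context: A pair $(x,y)\in R^2$ is unimodular if $xx'+yy'=1$ for some $x',y'\in R$, and admissible if it is the first row of some invertible $2\times 2$ matrix over $R$. *)

theory Defs
  imports "HOL-Algebra.UnivPoly"
begin

definition division_ring_alg :: "('a, 'm) ring_scheme \<Rightarrow> bool" where
  "division_ring_alg K \<longleftrightarrow> ring K \<and> \<one>\<^bsub>K\<^esub> \<noteq> \<zero>\<^bsub>K\<^esub> \<and> Units K = carrier K - {\<zero>\<^bsub>K\<^esub>}"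

text \<open>The polynomial ring K[X,Y] in two central indeterminates, realised as (K[X])[Y].\<close>
abbreviation UP2 :: "('a, 'm) ring_scheme \<Rightarrow> (nat \<Rightarrow> 'a, nat \<Rightarrow> nat \<Rightarrow> 'a) up_ring" where
  "UP2 K \<equiv> UP (UP K)"

definition constK :: "('a, 'm) ring_scheme \<Rightarrow> 'a \<Rightarrow> nat \<Rightarrow> nat \<Rightarrow> 'a" where
  "constK K c = monom (UP2 K) (monom (UP K) c 0) 0"

definition varX :: "('a, 'm) ring_scheme \<Rightarrow> nat \<Rightarrow> nat \<Rightarrow> 'a" where
  "varX K = monom (UP2 K) (monom (UP K) \<one>\<^bsub>K\<^esub> 1) 0"

definition varY :: "('a, 'm) ring_scheme \<Rightarrow> nat \<Rightarrow> nat \<Rightarrow> 'a" where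
  "varY K = monom (UP2 K) \<one>\<^bsub>UP K\<^esub> 1"

definition unimodular :: "('b, 'n) ring_scheme \<Rightarrow> 'b \<Rightarrow> 'b \<Rightarrow> bool" where
  "unimodular R x y \<longleftrightarrow> x \<in> carrier R \<and> y \<in> carrier R \<and>
     (\<exists>x'\<in>carrier R. \<exists>y'\<in>carrier R. x \<otimes>\<^bsub>R\<^esub> x' \<oplus>\<^bsub>R\<^esub> y \<otimes>\<^bsub>R\<^esub> y' = \<one>\<^bsub>R\<^esub>)"

definition mat2_invertible :: "('b, 'n) ring_scheme \<Rightarrow> 'b \<Rightarrow> 'b \<Rightarrow> 'b \<Rightarrow> 'b \<Rightarrow> bool" where
  "mat2_invertible R p q c d \<longleftrightarrow>
     (\<exists>e\<in>carrier R. \<exists>f\<in>carrier R. \<exists>g\<in>carrier R. \<exists>h\<in>carrier R.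
        p \<otimes>\<^bsub>R\<^esub> e \<oplus>\<^bsub>R\<^esub> q \<otimes>\<^bsub>R\<^esub> g = \<one>\<^bsub>R\<^esub> \<and>
        p \<otimes>\<^bsub>R\<^esub> f \<oplus>\<^bsub>R\<^esub> q \<otimes>\<^bsub>R\<^esub> h = \<zero>\<^bsub>R\<^esub> \<and>
        c \<otimes>\<^bsub>R\<^esub> e \<oplus>\<^bsub>R\<^esub> d \<otimes>\<^bsub>R\<^esub> g = \<zero>\<^bsub>R\<^esub> \<and>
        c \<otimes>\<^bsub>R\<^esub> f \<oplus>\<^bsub>R\<^esub> d \<otimes>\<^bsub>R\<^esub> h = \<one>\<^bsub>R\<^esub> \<and>
        e \<otimes>\<^bsub>R\<^esub> p \<oplus>\<^bsub>R\<^esub> f \<otimes>\<^bsub>R\<^esub> c = \<one>\<^bsub>R\<^esub> \<and>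
        e \<otimes>\<^bsub>R\<^esub> q \<oplus>\<^bsub>R\<^esub> f \<otimes>\<^bsub>R\<^esub> d = \<zero>\<^bsub>R\<^esub> \<and>
        g \<otimes>\<^bsub>R\<^esub> p \<oplus>\<^bsub>R\<^esub> h \<otimes>\<^bsub>R\<^esub> c = \<zero>\<^bsub>R\<^esub> \<and>
        g \<otimes>\<^bsub>R\<^esub> q \<oplus>\<^bsub>R\<^esub> h \<otimes>\<^bsub>R\<^esub> d = \<one>\<^bsub>R\<^esub>)"

definition admissible :: "('b, 'n) ring_scheme \<Rightarrow> 'b \<Rightarrow> 'b \<Rightarrow> bool" where
  "admissible R x y \<longleftrightarrow> x \<in> carrier R \<and> y \<in> carrier R \<and>
     (\<exists>c\<in>carrier R. \<exists>d\<in>carrier R. mat2_invertible R x y c d)"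

end

theory Submission
  imports Defs
begin

text \<open>Put x = X + a and y = Y + b. Since X and Y are central, x y - y x is the constant
  c = a b - b a, a unit of K, hence x (y c\<inverse>) - y (x c\<inverse>) = 1.
  If (x, -y) were the first row of an invertible matrix, the second components v of the
  solutions of x u - y v = 0 would all be right multiples of one such component h, say with
  x f = y h. The solution v = x c\<inverse> x is a nonzero constant in Y, so h is constant in Y, and
  comparing Y-coefficients in x f = y h gives h = (X + a) f1 with f1 \<in> K[X]. The solution
  v = x c\<inverse> y + 1 = h r then yields, in Y-degree 0, a right inverse of X + a in K[X],
  which is impossible for degree reasons.\<close>

definition zero_divisor_free :: "('a, 'm) ring_scheme \<Rightarrow> bool" where
  "zero_divisor_free R \<longleftrightarrow>
     (\<forall>x\<in>carrier R. \<forall>y\<in>carrier R. x \<otimes>\<^bsub>R\<^esub> y = \<zero>\<^bsub>R\<^esub> \<longrightarrow> x = \<zero>\<^bsub>R\<^esub> \<or> y = \<zero>\<^bsub>R\<^esub>)"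

lemma division_ring_alg_zero_divisor_free:
  assumes "division_ring_alg K"
  shows "zero_divisor_free K"
  unfolding zero_divisor_free_def
proof (intro ballI impI)
  fix x y assume xy: "x \<in> carrier K" "y \<in> carrier K" "x \<otimes>\<^bsub>K\<^esub> y = \<zero>\<^bsub>K\<^esub>"
  interpret K: ring K using assms by (simp add: division_ring_alg_def)
  show "x = \<zero>\<^bsub>K\<^esub> \<or> y = \<zero>\<^bsub>K\<^esub>"
  proof (cases "x = \<zero>\<^bsub>K\<^esub>")
    case False
    then have "x \<in> Units K" using assms xy by (simp add: division_ring_alg_def)
    then show ?thesis using xy by (metis K.Units_l_cancel K.r_null K.zero_closed)
  qed simp
qed

lemma (in ring) commutator_mult:
  assumes "x \<in> carrier R" "y \<in> carrier R" "z \<in> carrier R"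
  shows "x \<otimes> (y \<otimes> z) \<oplus> \<ominus> y \<otimes> (x \<otimes> z) = (x \<otimes> y \<ominus> y \<otimes> x) \<otimes> z"
  using assms by (simp add: m_assoc[symmetric] minus_eq l_distr l_minus)

lemma (in ring) unimodular_if_commutator_unit:
  assumes x: "x \<in> carrier R" and y: "y \<in> carrier R"
    and unit: "x \<otimes> y \<ominus> y \<otimes> x \<in> Units R"
  shows "unimodular R x (\<ominus> y)"
proof -
  define c' where "c' = inv (x \<otimes> y \<ominus> y \<otimes> x)"
  have c': "c' \<in> carrier R" "(x \<otimes> y \<ominus> y \<otimes> x) \<otimes> c' = \<one>"
    using unit by (simp_all add: c'_def)
  then have "x \<otimes> (y \<otimes> c') \<oplus> \<ominus> y \<otimes> (x \<otimes> c') = \<one>"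
    using x y by (simp add: commutator_mult)
  then show ?thesis
    unfolding unimodular_def using x y c' by blast
qed

lemma (in ring) commutator_kernel_vectors:
  assumes x: "x \<in> carrier R" and y: "y \<in> carrier R"
    and c': "c' \<in> carrier R" "(x \<otimes> y \<ominus> y \<otimes> x) \<otimes> c' = \<one>"
  shows "x \<otimes> (y \<otimes> (c' \<otimes> x) \<ominus> \<one>) \<oplus> \<ominus> y \<otimes> (x \<otimes> (c' \<otimes> x)) = \<zero>"
    and "x \<otimes> (y \<otimes> (c' \<otimes> y)) \<oplus> \<ominus> y \<otimes> (x \<otimes> (c' \<otimes> y) \<oplus> \<one>) = \<zero>"
proof -
  have key: "x \<otimes> (y \<otimes> (c' \<otimes> z)) \<oplus> \<ominus> y \<otimes> (x \<otimes> (c' \<otimes> z)) = z" if "z \<in> carrier R" for z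
    using commutator_mult[OF x y m_closed[OF c'(1) that]] x y c' that
    by (simp add: m_assoc[symmetric])
  show "x \<otimes> (y \<otimes> (c' \<otimes> x) \<ominus> \<one>) \<oplus> \<ominus> y \<otimes> (x \<otimes> (c' \<otimes> x)) = \<zero>"
    using key[OF x] x y c' by (simp add: minus_eq r_distr r_minus a_ac r_neg)
  show "x \<otimes> (y \<otimes> (c' \<otimes> y)) \<oplus> \<ominus> y \<otimes> (x \<otimes> (c' \<otimes> y) \<oplus> \<one>) = \<zero>"
    using key[OF y] x y c' by (simp add: r_distr l_minus a_ac r_neg)
qed

lemma (in ring) mat2_invertible_first_row_kernel:
  assumes p: "p \<in> carrier R" and q: "q \<in> carrier R"
    and c: "c \<in> carrier R" and d: "d \<in> carrier R"
    and inv: "mat2_invertible R p q c d"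
  obtains f h where "f \<in> carrier R" "h \<in> carrier R" "p \<otimes> f \<oplus> q \<otimes> h = \<zero>"
    and "\<And>u v. u \<in> carrier R \<Longrightarrow> v \<in> carrier R \<Longrightarrow> p \<otimes> u \<oplus> q \<otimes> v = \<zero> \<Longrightarrow>
           \<exists>r\<in>carrier R. v = h \<otimes> r"
proof -
  obtain f g h where fgh: "f \<in> carrier R" "g \<in> carrier R" "h \<in> carrier R"
    and col: "p \<otimes> f \<oplus> q \<otimes> h = \<zero>"
    and row1: "g \<otimes> p \<oplus> h \<otimes> c = \<zero>" and row2: "g \<otimes> q \<oplus> h \<otimes> d = \<one>"
    using inv unfolding mat2_invertible_def by blast
  have "\<exists>r\<in>carrier R. v = h \<otimes> r"
    if uv: "u \<in> carrier R" "v \<in> carrier R" and ker: "p \<otimes> u \<oplus> q \<otimes> v = \<zero>" for u v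
  proof
    show "c \<otimes> u \<oplus> d \<otimes> v \<in> carrier R" using c d uv by simp
    have "v = (g \<otimes> q \<oplus> h \<otimes> d) \<otimes> v" using row2 uv by simp
    also have "\<dots> = (g \<otimes> p \<oplus> h \<otimes> c) \<otimes> u \<oplus> (g \<otimes> q \<oplus> h \<otimes> d) \<otimes> v"
      using row1 uv p q c d fgh by simp
    also have "\<dots> = g \<otimes> (p \<otimes> u \<oplus> q \<otimes> v) \<oplus> h \<otimes> (c \<otimes> u \<oplus> d \<otimes> v)"
      using p q c d uv fgh by (simp add: l_distr r_distr m_assoc a_ac)
    also have "\<dots> = h \<otimes> (c \<otimes> u \<oplus> d \<otimes> v)" using ker fgh c d uv by simp
    finally show "v = h \<otimes> (c \<otimes> u \<oplus> d \<otimes> v)" .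
  qed
  with fgh col that show ?thesis by blast
qed

context UP_ring
begin

lemma coeff_mult_deg_add:
  assumes p: "p \<in> carrier P" and q: "q \<in> carrier P"
  shows "coeff P (p \<otimes>\<^bsub>P\<^esub> q) (deg R p + deg R q) = lcoeff p \<otimes> lcoeff q"
proof -
  let ?s = "\<lambda>i. coeff P p i \<otimes> coeff P q (deg R p + deg R q - i)"
  have less_add_diff: "\<And>(k::nat) n m. k < n \<Longrightarrow> m < n + m - k" by arith
  have "coeff P (p \<otimes>\<^bsub>P\<^esub> q) (deg R p + deg R q) = (\<Oplus>i \<in> {.. deg R p + deg R q}. ?s i)"
    using p q by simp
  also have "\<dots> = (\<Oplus>i \<in> {..< deg R p} \<union> {deg R p .. deg R p + deg R q}. ?s i)"
    by (simp only: ivl_disj_un_one)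
  also have "\<dots> = (\<Oplus>i \<in> {deg R p .. deg R p + deg R q}. ?s i)"
    by (simp cong: R.finsum_cong add: R.finsum_Un_disjoint ivl_disj_int_one
        deg_aboveD less_add_diff p q Pi_def)
  also have "\<dots> = (\<Oplus>i \<in> {deg R p} \<union> {deg R p <.. deg R p + deg R q}. ?s i)"
    by (simp only: ivl_disj_un_singleton)
  also have "\<dots> = lcoeff p \<otimes> lcoeff q"
    by (simp cong: R.finsum_cong add: deg_aboveD p q Pi_def)
  finally show ?thesis .
qed

lemma deg_mult_zero_divisor_free:
  assumes zdf: "zero_divisor_free R"
    and p: "p \<in> carrier P" "p \<noteq> \<zero>\<^bsub>P\<^esub>" and q: "q \<in> carrier P" "q \<noteq> \<zero>\<^bsub>P\<^esub>"
  shows "p \<otimes>\<^bsub>P\<^esub> q \<noteq> \<zero>\<^bsub>P\<^esub>" and "deg R (p \<otimes>\<^bsub>P\<^esub> q) = deg R p + deg R q"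
proof -
  have "lcoeff p \<otimes> lcoeff q \<noteq> \<zero>"
    using zdf lcoeff_nonzero[OF p(2,1)] lcoeff_nonzero[OF q(2,1)] p q
    by (metis coeff_closed zero_divisor_free_def)
  then have top: "coeff P (p \<otimes>\<^bsub>P\<^esub> q) (deg R p + deg R q) \<noteq> \<zero>"
    unfolding coeff_mult_deg_add[OF p(1) q(1)] .
  then show "p \<otimes>\<^bsub>P\<^esub> q \<noteq> \<zero>\<^bsub>P\<^esub>" by auto
  show "deg R (p \<otimes>\<^bsub>P\<^esub> q) = deg R p + deg R q"
    using deg_mult_ring[OF p(1) q(1)] deg_belowI[OF top] p q by simp
qed

lemma UP_zero_divisor_free:
  "zero_divisor_free R \<Longrightarrow> zero_divisor_free P"
  using deg_mult_zero_divisor_free(1) unfolding zero_divisor_free_def[of P] by blast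

lemma left_factor_of_nonzero_const:
  assumes zdf: "zero_divisor_free R" and h: "h \<in> carrier P" and r: "r \<in> carrier P"
    and w: "w \<in> carrier R" "w \<noteq> \<zero>" and eq: "monom P w 0 = h \<otimes>\<^bsub>P\<^esub> r"
  shows "h = monom P (coeff P h 0) 0"
proof -
  have "monom P w 0 \<noteq> \<zero>\<^bsub>P\<^esub>" using w by (metis coeff_monom coeff_zero)
  then have "h \<noteq> \<zero>\<^bsub>P\<^esub>" "r \<noteq> \<zero>\<^bsub>P\<^esub>" using eq h r by auto
  then have "deg R h + deg R r = 0"
    using deg_mult_zero_divisor_free(2)[OF zdf h _ r] eq w by (metis deg_monom_le le_zero_eq)
  then show ?thesis using deg_zero_impl_monom[OF h] by simp
qed

lemma mult_ne_one_if_deg_pos: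
  assumes zdf: "zero_divisor_free R" and p: "p \<in> carrier P" "0 < deg R p"
    and z: "z \<in> carrier P"
  shows "p \<otimes>\<^bsub>P\<^esub> z \<noteq> \<one>\<^bsub>P\<^esub>"
proof
  assume inv: "p \<otimes>\<^bsub>P\<^esub> z = \<one>\<^bsub>P\<^esub>"
  have "p \<noteq> \<zero>\<^bsub>P\<^esub>" using p by auto
  moreover have "z \<noteq> \<zero>\<^bsub>P\<^esub>"
  proof
    assume "z = \<zero>\<^bsub>P\<^esub>"
    then have "\<one>\<^bsub>P\<^esub> = \<zero>\<^bsub>P\<^esub>" using inv p by simp
    then have "p = \<zero>\<^bsub>P\<^esub>" using p by (metis P.r_one P.r_null)
    then show False using p by simp
  qed
  ultimately have "deg R (p \<otimes>\<^bsub>P\<^esub> z) = deg R p + deg R z"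
    using deg_mult_zero_divisor_free(2)[OF zdf] p z by blast
  then show False using inv p by simp
qed

lemma coeff_const_mult:
  assumes "c \<in> carrier R" "p \<in> carrier P"
  shows "coeff P (monom P c 0 \<otimes>\<^bsub>P\<^esub> p) n = c \<otimes> coeff P p n"
  using coeff_monom_mult[OF assms, of 0 n] by simp

lemma monom_0_Units:
  assumes "c \<in> Units R"
  shows "monom P c 0 \<in> Units P"
proof -
  have c: "c \<in> carrier R" "inv c \<in> carrier R" using assms by (simp_all add: R.Units_closed)
  then have "monom P (inv c) 0 \<otimes>\<^bsub>P\<^esub> monom P c 0 = \<one>\<^bsub>P\<^esub>"
       "monom P c 0 \<otimes>\<^bsub>P\<^esub> monom P (inv c) 0 = \<one>\<^bsub>P\<^esub>"
    using assms by (simp_all add: monom_mult[symmetric])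
  then show ?thesis
    using c unfolding Units_def[of P] by (auto intro!: bexI[of _ "monom P (inv c) 0"])
qed

lemma commutator_shifted_var_const:
  assumes a: "a \<in> carrier R" and c: "c \<in> carrier R"
  shows "(monom P \<one> 1 \<oplus>\<^bsub>P\<^esub> monom P a 0) \<otimes>\<^bsub>P\<^esub> monom P c 0
           \<ominus>\<^bsub>P\<^esub> monom P c 0 \<otimes>\<^bsub>P\<^esub> (monom P \<one> 1 \<oplus>\<^bsub>P\<^esub> monom P a 0)
         = monom P (a \<otimes> c \<ominus> c \<otimes> a) 0"
    and "monom P c 0 \<otimes>\<^bsub>P\<^esub> (monom P \<one> 1 \<oplus>\<^bsub>P\<^esub> monom P a 0)
           \<ominus>\<^bsub>P\<^esub> (monom P \<one> 1 \<oplus>\<^bsub>P\<^esub> monom P a 0) \<otimes>\<^bsub>P\<^esub> monom P c 0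
         = monom P (c \<otimes> a \<ominus> a \<otimes> c) 0"
  using a c by (simp_all add: l_distr r_distr monom_mult[symmetric] a_minus_def R.minus_eq
      minus_add a_ac r_neg r_neg2)

lemma shifted_var_commutator_right_inverse:
  fixes \<xi> \<beta>
  defines "x \<equiv> monom P \<xi> 0" and "y \<equiv> monom P \<one> 1 \<oplus>\<^bsub>P\<^esub> monom P \<beta> 0"
  assumes \<xi>: "\<xi> \<in> carrier R" and \<beta>: "\<beta> \<in> carrier R"
    and unit: "\<xi> \<otimes> \<beta> \<ominus> \<beta> \<otimes> \<xi> \<in> Units R"
  shows "(x \<otimes>\<^bsub>P\<^esub> y \<ominus>\<^bsub>P\<^esub> y \<otimes>\<^bsub>P\<^esub> x) \<otimes>\<^bsub>P\<^esub> monom P (inv (\<xi> \<otimes> \<beta> \<ominus> \<beta> \<otimes> \<xi>)) 0 = \<one>\<^bsub>P\<^esub>"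
  using commutator_shifted_var_const(2)[OF \<beta> \<xi>] unit
  by (simp add: x_def y_def R.Units_closed monom_mult[symmetric])

lemma shifted_var_pair_unimodular:
  fixes \<xi> \<beta>
  defines "x \<equiv> monom P \<xi> 0" and "y \<equiv> monom P \<one> 1 \<oplus>\<^bsub>P\<^esub> monom P \<beta> 0"
  assumes \<xi>: "\<xi> \<in> carrier R" and \<beta>: "\<beta> \<in> carrier R"
    and unit: "\<xi> \<otimes> \<beta> \<ominus> \<beta> \<otimes> \<xi> \<in> Units R"
  shows "unimodular P x (\<ominus>\<^bsub>P\<^esub> y)"
  using P.unimodular_if_commutator_unit commutator_shifted_var_const(2)[OF \<beta> \<xi>]
    monom_0_Units[OF unit] \<xi> \<beta> by (simp add: x_def y_def)

lemma shifted_var_kernel_generator: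
  fixes \<xi> \<beta> f h
  defines "x \<equiv> monom P \<xi> 0" and "y \<equiv> monom P \<one> 1 \<oplus>\<^bsub>P\<^esub> monom P \<beta> 0"
  assumes zdf: "zero_divisor_free R"
    and \<xi>: "\<xi> \<in> carrier R" "\<xi> \<noteq> \<zero>" and \<beta>: "\<beta> \<in> carrier R"
    and unit: "\<xi> \<otimes> \<beta> \<ominus> \<beta> \<otimes> \<xi> \<in> Units R"
    and fh: "f \<in> carrier P" "h \<in> carrier P" and col: "x \<otimes>\<^bsub>P\<^esub> f = y \<otimes>\<^bsub>P\<^esub> h"
    and ker: "\<And>u v. u \<in> carrier P \<Longrightarrow> v \<in> carrier P \<Longrightarrow>
       x \<otimes>\<^bsub>P\<^esub> u \<oplus>\<^bsub>P\<^esub> \<ominus>\<^bsub>P\<^esub> y \<otimes>\<^bsub>P\<^esub> v = \<zero>\<^bsub>P\<^esub> \<Longrightarrow> \<exists>r\<in>carrier P. v = h \<otimes>\<^bsub>P\<^esub> r"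
  shows "h = monom P (\<xi> \<otimes> coeff P f 1) 0"
proof -
  define \<gamma>' where "\<gamma>' = inv (\<xi> \<otimes> \<beta> \<ominus> \<beta> \<otimes> \<xi>)"
  have "\<one> \<noteq> \<zero>" using \<xi> by (metis R.r_one R.r_null)
  then have \<gamma>': "\<gamma>' \<in> carrier R" "\<gamma>' \<noteq> \<zero>"
    using unit unfolding \<gamma>'_def by (metis R.Units_closed R.Units_inv_closed R.Units_r_inv R.r_null)+
  have carrier: "x \<in> carrier P" "y \<in> carrier P" "monom P \<gamma>' 0 \<in> carrier P"
    using \<xi> \<beta> \<gamma>' by (simp_all add: x_def y_def)
  note inverse = shifted_var_commutator_right_inverse[OF \<xi>(1) \<beta> unit, folded x_def y_def \<gamma>'_def]
  obtain r where r: "r \<in> carrier P" "x \<otimes>\<^bsub>P\<^esub> (monom P \<gamma>' 0 \<otimes>\<^bsub>P\<^esub> x) = h \<otimes>\<^bsub>P\<^esub> r"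
    using ker[OF _ _ P.commutator_kernel_vectors(1)[OF carrier inverse]] carrier by auto
  have "x \<otimes>\<^bsub>P\<^esub> (monom P \<gamma>' 0 \<otimes>\<^bsub>P\<^esub> x) = monom P (\<xi> \<otimes> (\<gamma>' \<otimes> \<xi>)) 0"
    using \<xi> \<gamma>' by (simp add: x_def monom_mult[symmetric])
  moreover have "\<xi> \<otimes> (\<gamma>' \<otimes> \<xi>) \<noteq> \<zero>"
    using zdf \<xi> \<gamma>' unfolding zero_divisor_free_def by blast
  ultimately have h: "h = monom P (coeff P h 0) 0"
    using left_factor_of_nonzero_const[OF zdf fh(2) r(1)] r(2) \<xi> \<gamma>' by (metis R.m_closed)
  have "y \<otimes>\<^bsub>P\<^esub> h = monom P (coeff P h 0) 1 \<oplus>\<^bsub>P\<^esub> monom P (\<beta> \<otimes> coeff P h 0) 0"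
    using \<beta> fh by (subst h) (simp add: y_def l_distr monom_mult[symmetric])
  then have "coeff P (x \<otimes>\<^bsub>P\<^esub> f) 1 = coeff P h 0"
    using col \<beta> fh by simp
  then show ?thesis
    using h \<xi> fh by (simp add: x_def coeff_const_mult)
qed

lemma shifted_var_pair_not_admissible:
  fixes \<xi> \<beta>
  defines "x \<equiv> monom P \<xi> 0" and "y \<equiv> monom P \<one> 1 \<oplus>\<^bsub>P\<^esub> monom P \<beta> 0"
  assumes zdf: "zero_divisor_free R"
    and \<xi>: "\<xi> \<in> carrier R" and \<beta>: "\<beta> \<in> carrier R"
    and unit: "\<xi> \<otimes> \<beta> \<ominus> \<beta> \<otimes> \<xi> \<in> Units R"
    and no_right_inverse: "\<And>z. z \<in> carrier R \<Longrightarrow> \<xi> \<otimes> z \<noteq> \<one>"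
  shows "\<not> admissible P x (\<ominus>\<^bsub>P\<^esub> y)"
proof
  assume "admissible P x (\<ominus>\<^bsub>P\<^esub> y)"
  then obtain c d where cd: "c \<in> carrier P" "d \<in> carrier P" "mat2_invertible P x (\<ominus>\<^bsub>P\<^esub> y) c d"
    unfolding admissible_def by blast
  define \<gamma>' where "\<gamma>' = inv (\<xi> \<otimes> \<beta> \<ominus> \<beta> \<otimes> \<xi>)"
  have carrier: "x \<in> carrier P" "y \<in> carrier P" "monom P \<gamma>' 0 \<in> carrier P" "\<gamma>' \<in> carrier R"
    using \<xi> \<beta> unit by (simp_all add: x_def y_def \<gamma>'_def R.Units_closed)
  obtain f h where fh: "f \<in> carrier P" "h \<in> carrier P"
    and col: "x \<otimes>\<^bsub>P\<^esub> f \<oplus>\<^bsub>P\<^esub> \<ominus>\<^bsub>P\<^esub> y \<otimes>\<^bsub>P\<^esub> h = \<zero>\<^bsub>P\<^esub>"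
    and ker: "\<And>u v. u \<in> carrier P \<Longrightarrow> v \<in> carrier P \<Longrightarrow>
       x \<otimes>\<^bsub>P\<^esub> u \<oplus>\<^bsub>P\<^esub> \<ominus>\<^bsub>P\<^esub> y \<otimes>\<^bsub>P\<^esub> v = \<zero>\<^bsub>P\<^esub> \<Longrightarrow> \<exists>r\<in>carrier P. v = h \<otimes>\<^bsub>P\<^esub> r"
    using P.mat2_invertible_first_row_kernel[OF carrier(1) _ cd] carrier by blast
  have "x \<otimes>\<^bsub>P\<^esub> f = y \<otimes>\<^bsub>P\<^esub> h"
    using col carrier fh by (metis P.a_inv_closed P.l_minus P.m_closed P.minus_equality P.add.inv_inv)
  moreover have "\<xi> \<noteq> \<zero>"
  proof
    assume "\<xi> = \<zero>"
    then have "\<zero> \<in> Units R" using unit \<beta> by (simp add: R.minus_eq)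
    then have "\<one> = \<zero>" by (metis R.Units_r_inv R.Units_inv_closed R.l_null)
    then show False using no_right_inverse[of \<zero>] \<xi> by simp
  qed
  ultimately have h: "h = monom P (\<xi> \<otimes> coeff P f 1) 0"
    using shifted_var_kernel_generator[OF zdf \<xi> _ \<beta> unit fh] ker by (simp add: x_def y_def)
  note inverse = shifted_var_commutator_right_inverse[OF \<xi> \<beta> unit, folded x_def y_def \<gamma>'_def]
  obtain r where r: "r \<in> carrier P"
    "x \<otimes>\<^bsub>P\<^esub> (monom P \<gamma>' 0 \<otimes>\<^bsub>P\<^esub> y) \<oplus>\<^bsub>P\<^esub> \<one>\<^bsub>P\<^esub> = h \<otimes>\<^bsub>P\<^esub> r"
    using ker[OF _ _ P.commutator_kernel_vectors(2)[OF carrier(1-3) inverse]] carrier by auto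
  have "coeff P (x \<otimes>\<^bsub>P\<^esub> (monom P \<gamma>' 0 \<otimes>\<^bsub>P\<^esub> y) \<oplus>\<^bsub>P\<^esub> \<one>\<^bsub>P\<^esub>) 0
      = \<xi> \<otimes> (\<gamma>' \<otimes> \<beta>) \<oplus> \<one>"
    using \<xi> \<beta> carrier by (simp add: x_def coeff_const_mult) (simp add: y_def)
  moreover have "coeff P (h \<otimes>\<^bsub>P\<^esub> r) 0 = \<xi> \<otimes> coeff P f 1 \<otimes> coeff P r 0"
    using \<xi> fh r(1) by (simp add: h coeff_const_mult)
  ultimately have coeff0: "\<xi> \<otimes> (\<gamma>' \<otimes> \<beta>) \<oplus> \<one> = \<xi> \<otimes> coeff P f 1 \<otimes> coeff P r 0"
    using r(2) by simp
  have "\<xi> \<otimes> (coeff P f 1 \<otimes> coeff P r 0 \<ominus> \<gamma>' \<otimes> \<beta>)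
      = \<xi> \<otimes> coeff P f 1 \<otimes> coeff P r 0 \<ominus> \<xi> \<otimes> (\<gamma>' \<otimes> \<beta>)"
    using \<xi> \<beta> carrier fh r(1) by (simp add: R.minus_eq R.r_distr R.r_minus R.m_assoc)
  also have "\<dots> = \<one>"
    using \<xi> \<beta> carrier unfolding coeff0[symmetric] by (simp add: R.minus_eq R.a_ac R.r_neg)
  finally show False using no_right_inverse fh r(1) carrier \<beta> by simp
qed

end

theorem mainTheorem7:
  fixes K :: "('a, 'm) ring_scheme" and a b :: 'a
  assumes "division_ring_alg K"
    and "a \<in> carrier K" and "b \<in> carrier K"
    and "a \<otimes>\<^bsub>K\<^esub> b \<ominus>\<^bsub>K\<^esub> b \<otimes>\<^bsub>K\<^esub> a \<noteq> \<zero>\<^bsub>K\<^esub>"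
  shows "unimodular (UP2 K) (varX K \<oplus>\<^bsub>UP2 K\<^esub> constK K a)
           (\<ominus>\<^bsub>UP2 K\<^esub> (varY K \<oplus>\<^bsub>UP2 K\<^esub> constK K b))
       \<and> \<not> admissible (UP2 K) (varX K \<oplus>\<^bsub>UP2 K\<^esub> constK K a)
           (\<ominus>\<^bsub>UP2 K\<^esub> (varY K \<oplus>\<^bsub>UP2 K\<^esub> constK K b))"
proof -
  interpret K: ring K using assms(1) by (simp add: division_ring_alg_def)
  interpret X: UP_ring K "UP K" by unfold_locales
  interpret Y: UP_ring "UP K" "UP2 K" by unfold_locales
  have zdf: "zero_divisor_free K" "zero_divisor_free (UP K)"
    using division_ring_alg_zero_divisor_free[OF assms(1)] X.UP_zero_divisor_free by auto
  define \<xi> where "\<xi> = monom (UP K) \<one>\<^bsub>K\<^esub> 1 \<oplus>\<^bsub>UP K\<^esub> monom (UP K) a 0"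
  define \<beta> where "\<beta> = monom (UP K) b 0"
  have \<xi>\<beta>: "\<xi> \<in> carrier (UP K)" "\<beta> \<in> carrier (UP K)"
    using assms(2,3) by (simp_all add: \<xi>_def \<beta>_def)
  have "\<xi> \<otimes>\<^bsub>UP K\<^esub> \<beta> \<ominus>\<^bsub>UP K\<^esub> \<beta> \<otimes>\<^bsub>UP K\<^esub> \<xi> = monom (UP K) (a \<otimes>\<^bsub>K\<^esub> b \<ominus>\<^bsub>K\<^esub> b \<otimes>\<^bsub>K\<^esub> a) 0"
    unfolding \<xi>_def \<beta>_def using X.commutator_shifted_var_const(1) assms(2,3) .
  moreover have "a \<otimes>\<^bsub>K\<^esub> b \<ominus>\<^bsub>K\<^esub> b \<otimes>\<^bsub>K\<^esub> a \<in> Units K"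
    using assms by (simp add: division_ring_alg_def)
  ultimately have unit: "\<xi> \<otimes>\<^bsub>UP K\<^esub> \<beta> \<ominus>\<^bsub>UP K\<^esub> \<beta> \<otimes>\<^bsub>UP K\<^esub> \<xi> \<in> Units (UP K)"
    using X.monom_0_Units by simp
  have "coeff (UP K) \<xi> 1 \<noteq> \<zero>\<^bsub>K\<^esub>"
    using assms(1,2) by (simp add: \<xi>_def division_ring_alg_def)
  then have "0 < deg K \<xi>" using X.deg_aboveD[of \<xi> 1] \<xi>\<beta>(1) by (metis gr0I less_one)
  then have "\<And>z. z \<in> carrier (UP K) \<Longrightarrow> \<xi> \<otimes>\<^bsub>UP K\<^esub> z \<noteq> \<one>\<^bsub>UP K\<^esub>"
    using X.mult_ne_one_if_deg_pos[OF zdf(1) \<xi>\<beta>(1)] by blast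
  moreover have "varX K \<oplus>\<^bsub>UP2 K\<^esub> constK K a = monom (UP2 K) \<xi> 0"
    "varY K \<oplus>\<^bsub>UP2 K\<^esub> constK K b = monom (UP2 K) \<one>\<^bsub>UP K\<^esub> 1 \<oplus>\<^bsub>UP2 K\<^esub> monom (UP2 K) \<beta> 0"
    using assms(2) by (simp_all add: varX_def varY_def constK_def \<xi>_def \<beta>_def)
  ultimately show ?thesis
    using Y.shifted_var_pair_unimodular[OF \<xi>\<beta> unit]
      Y.shifted_var_pair_not_admissible[OF zdf(2) \<xi>\<beta> unit] by simp
qed

end
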